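(* Let $\Delta$ be a simplicial polytopal fan in $\mathbb{R}^d$ with ray generators $\mathbf{v}_1,\ldots,\mathbf{v}_n$, and let $\{(\mathbf{u}^{(i)},y^{(i)})\}_{i=1}^m\subset\mathbb{R}^d\times\mathbb{R}$ be noiseless data, i.e. there is a polytope $P\in\mathcal{P}(\Delta)$ with $y^{(i)}=h_P(\mathbf{u}^{(i)})$ for all $i$. With $U=(\mathbf{u}^{(1)},\ldots,\mathbf{u}^{(m)})^\mathsf{T}$ and $\mathbf{y}=(y^{(i)})_i$, \[ \hat{P}^\Delta(U,\mathbf{y})=\{\mathbf{h}\in\mathcal{P}(\Delta)\colon A_U\mathbf{h}=\mathbf{y}\}. \]
   Context: A fan is simplicial if every cone is generated by linearly independent vectors; polytopal if it is the normal fan of a polytope. $h_P(\mathbf{u})=\max_{\mathbf{x}\in P}\langle\mathbf{x},\mathbf{u}\rangle$. For $\mathbf{h}\in\mathbb{R}^n$, $P(\mathbf{h})=\{\mathbf{x}\colon\langle\mathbf{x},\mathbf{v}_i\rangle\le h_i\ \forall i\}$. The deformation cone $\mathcal{P}(\Delta)$ is the set of polytopes whose normal fan is coarsened by $\Delta$, identified via support vectors $\mathbf{h}=(h_P(\mathbf{v}_i))_i$ with a closed polyhedral cone in $\mathbb{R}^n$. For $\mathbf{u}\in\mathbb{R}^d$, with $\sigma$ the cone of $\Delta$ containing $\mathbf{u}$ in its relative interior and $\mathbf{u}=\sum_{k\in I_\sigma}\lambda_k\mathbf{v}_k$ over the generators of $\sigma$, set $[\mathbf{u}]_i=\lambda_i$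 for $i\in I_\sigma$ and $0$ otherwise. $A_U$ is the $m\times n$ matrix with rows $[\mathbf{u}^{(i)}]^\mathsf{T}$. The least-squares estimator $\hat{P}^\Delta(U,\mathbf{y})$ is the set of support vectors of polytopes $P\in\mathcal{P}(\Delta)$ minimizing $\frac1m\sum_i(h_P(\mathbf{u}^{(i)})-y^{(i)})^2$. *)

theory Defs
  imports "HOL-Analysis.Analysis"
begin

text \<open>Ray generators are indexed by a finite type 'n (so n = CARD('n)); a cone of the
  fan is described by the index set S of its generators, cone S = pos_hull v S.\<close>

definition pos_hull :: "('n \<Rightarrow> 'a::euclidean_space) \<Rightarrow> 'n set \<Rightarrow> 'a set" where
  "pos_hull v S = {(\<Sum>i\<in>S. c i *\<^sub>R v i) | c. \<forall>i\<in>S. c i \<ge> 0}"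

definition simplicial_fan :: "('n::finite \<Rightarrow> 'a::euclidean_space) \<Rightarrow> 'n set set \<Rightarrow> bool" where
  "simplicial_fan v Delta \<longleftrightarrow>
     {} \<in> Delta \<and>
     (\<forall>S\<in>Delta. \<forall>T. T \<subseteq> S \<longrightarrow> T \<in> Delta) \<and>
     (\<forall>S\<in>Delta. inj_on v S \<and> independent (v ` S)) \<and>
     (\<forall>S\<in>Delta. \<forall>T\<in>Delta. pos_hull v S \<inter> pos_hull v T = pos_hull v (S \<inter> T)) \<and>
     (\<forall>i. {i} \<in> Delta)"

definition fan_cones :: "('n \<Rightarrow> 'a::euclidean_space) \<Rightarrow> 'n set set \<Rightarrow> 'a set set" where
  "fan_cones v Delta = pos_hull v ` Delta"

definition normal_cone :: "'a::euclidean_space set \<Rightarrow> 'a set \<Rightarrow> 'a set" where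
  "normal_cone P F = {u. \<forall>x\<in>F. \<forall>z\<in>P. inner z u \<le> inner x u}"

definition normal_fan :: "'a::euclidean_space set \<Rightarrow> 'a set set" where
  "normal_fan P = {normal_cone P F | F. F face_of P \<and> F \<noteq> {}}"

definition polytopal_fan :: "('n::finite \<Rightarrow> 'a::euclidean_space) \<Rightarrow> 'n set set \<Rightarrow> bool" where
  "polytopal_fan v Delta \<longleftrightarrow> (\<exists>Q. polytope Q \<and> Q \<noteq> {} \<and> normal_fan Q = fan_cones v Delta)"

definition support_fun :: "'a::euclidean_space set \<Rightarrow> 'a \<Rightarrow> real" where
  "support_fun P u = (SUP x\<in>P. inner x u)"

definition coarsened_by :: "'a::euclidean_space set \<Rightarrow> ('n \<Rightarrow> 'a) \<Rightarrow> 'n set set \<Rightarrow> bool" where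
  "coarsened_by P v Delta \<longleftrightarrow> (\<forall>S\<in>Delta. \<exists>C\<in>normal_fan P. pos_hull v S \<subseteq> C)"

definition def_polytopes :: "('n::finite \<Rightarrow> 'a::euclidean_space) \<Rightarrow> 'n set set \<Rightarrow> 'a set set" where
  "def_polytopes v Delta = {P. polytope P \<and> P \<noteq> {} \<and> coarsened_by P v Delta}"

definition support_vec :: "('n::finite \<Rightarrow> 'a::euclidean_space) \<Rightarrow> 'a set \<Rightarrow> real^'n" where
  "support_vec v P = (\<chi> i. support_fun P (v i))"

definition deformation_cone :: "('n::finite \<Rightarrow> 'a::euclidean_space) \<Rightarrow> 'n set set \<Rightarrow> (real^'n) set" where
  "deformation_cone v Delta = support_vec v ` def_polytopes v Delta"

definition fan_coords :: "('n::finite \<Rightarrow> 'a::euclidean_space) \<Rightarrow> 'n set set \<Rightarrow> 'a \<Rightarrow> real^'n" where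
  "fan_coords v Delta u = (THE lam. \<exists>S\<in>Delta. u \<in> rel_interior (pos_hull v S) \<and>
       (\<forall>i. i \<notin> S \<longrightarrow> lam $ i = 0) \<and> u = (\<Sum>i\<in>S. (lam $ i) *\<^sub>R v i))"

definition A_mat :: "('n::finite \<Rightarrow> 'a::euclidean_space) \<Rightarrow> 'n set set \<Rightarrow> ('m::finite \<Rightarrow> 'a) \<Rightarrow> real^'n^'m" where
  "A_mat v Delta U = (\<chi> i. fan_coords v Delta (U i))"

definition ls_objective :: "'a::euclidean_space set \<Rightarrow> ('m::finite \<Rightarrow> 'a) \<Rightarrow> real^'m \<Rightarrow> real" where
  "ls_objective P U y = (1 / real CARD('m)) * (\<Sum>i\<in>UNIV. (support_fun P (U i) - y $ i)\<^sup>2)"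

definition ls_estimator :: "('n::finite \<Rightarrow> 'a::euclidean_space) \<Rightarrow> 'n set set \<Rightarrow> ('m::finite \<Rightarrow> 'a) \<Rightarrow> real^'m \<Rightarrow> (real^'n) set" where
  "ls_estimator v Delta U y = support_vec v ` {P \<in> def_polytopes v Delta.
       \<forall>Q\<in>def_polytopes v Delta. ls_objective P U y \<le> ls_objective Q U y}"

end

theory Submission
  imports Defs
begin

(* On every cone of \<Delta> the support function of a polytope P \<in> \<P>(\<Delta>) is linear: the
   cone lies in the normal cone of a face F of P, so there h_P = <x, -> for any x \<in> F.
   For a simplicial fan the coordinates [u] are the unique coefficients of u on the
   generators of a cone containing it, hence A_U applied to the support vector of P gives
   (h_P(u^(i)))_i.  The least-squares objective is then nonnegative and vanishes exactly at
   the polytopes with A_U h = y; by noiselessness such a polytope exists, so these are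
   precisely the minimizers. *)

lemma independent_image_coeffs_eq:
  fixes v :: "'n \<Rightarrow> 'a::euclidean_space"
  assumes "inj_on v S" "independent (v ` S)"
    and "(\<Sum>i\<in>S. c i *\<^sub>R v i) = (\<Sum>i\<in>S. d i *\<^sub>R v i)" "i \<in> S"
  shows "c i = d i"
proof -
  define e where "e = (\<lambda>i. c i - d i) \<circ> inv_into S v"
  have "(\<Sum>x\<in>v ` S. e x *\<^sub>R x) = (\<Sum>i\<in>S. (c i - d i) *\<^sub>R v i)"
    using assms(1) by (simp add: sum.reindex e_def)
  also have "\<dots> = 0"
    using assms(3) by (simp add: scaleR_diff_left sum_subtractf)
  finally have "e (v i) = 0"
    using assms(2,4) unfolding independent_explicit by blast
  thus ?thesis using assms(1,4) by (simp add: e_def)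
qed

lemma pos_hull_scaleR:
  assumes "t \<ge> 0" "x \<in> pos_hull v T"
  shows "t *\<^sub>R x \<in> pos_hull v T"
proof -
  obtain a where a: "x = (\<Sum>i\<in>T. a i *\<^sub>R v i)" "\<forall>i\<in>T. a i \<ge> 0"
    using assms(2) unfolding pos_hull_def by blast
  have "t *\<^sub>R x = (\<Sum>i\<in>T. (t * a i) *\<^sub>R v i)"
    by (simp add: a scaleR_sum_right)
  with a(2) assms(1) show ?thesis
    unfolding pos_hull_def by (auto intro!: exI[of _ "\<lambda>i. t * a i"])
qed

lemma convex_pos_hull: "convex (pos_hull v T)"
  unfolding convex_def
proof (intro ballI allI impI)
  fix x y and p q :: real
  assume "x \<in> pos_hull v T" "y \<in> pos_hull v T" and pq: "0 \<le> p" "0 \<le> q" "p + q = 1"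
  then obtain a b where a: "x = (\<Sum>i\<in>T. a i *\<^sub>R v i)" "\<forall>i\<in>T. a i \<ge> 0"
    and b: "y = (\<Sum>i\<in>T. b i *\<^sub>R v i)" "\<forall>i\<in>T. b i \<ge> 0"
    unfolding pos_hull_def by blast
  have "p *\<^sub>R x + q *\<^sub>R y = (\<Sum>i\<in>T. (p * a i + q * b i) *\<^sub>R v i)"
    by (simp add: a b scaleR_sum_right scaleR_add_left sum.distrib)
  with a(2) b(2) pq show "p *\<^sub>R x + q *\<^sub>R y \<in> pos_hull v T"
    unfolding pos_hull_def by (auto intro!: exI[of _ "\<lambda>i. p * a i + q * b i"])
qed

lemma pos_hull_subset_span: "pos_hull v T \<subseteq> span (v ` T)"
  unfolding pos_hull_def by (auto intro!: span_sum intro: span_scale span_base)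

lemma zero_in_pos_hull: "0 \<in> pos_hull v T"
  unfolding pos_hull_def by (auto intro!: exI[of _ "\<lambda>j. 0"])

lemma generator_in_pos_hull:
  fixes v :: "'n::finite \<Rightarrow> 'a::euclidean_space"
  assumes "i \<in> T"
  shows "v i \<in> pos_hull v T"
proof -
  have "(\<Sum>j\<in>T. (if j = i then 1 else 0) *\<^sub>R v j) = v i"
    using assms by (simp add: if_distrib[of "\<lambda>c. c *\<^sub>R _"] cong: if_cong)
  thus ?thesis
    unfolding pos_hull_def by (auto intro!: exI[of _ "\<lambda>j. if j = i then 1 else 0"])
qed

lemma affine_hull_pos_hull:
  fixes v :: "'n::finite \<Rightarrow> 'a::euclidean_space"
  shows "affine hull (pos_hull v T) = span (v ` T)"
proof
  show "affine hull (pos_hull v T) \<subseteq> span (v ` T)"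
    by (rule hull_minimal[OF pos_hull_subset_span]) (simp add: subspace_imp_affine)
  have "insert 0 (v ` T) \<subseteq> pos_hull v T"
    using zero_in_pos_hull generator_in_pos_hull by blast
  hence "affine hull (insert 0 (v ` T)) \<subseteq> affine hull (pos_hull v T)"
    by (rule hull_mono)
  thus "span (v ` T) \<subseteq> affine hull (pos_hull v T)"
    by (simp add: affine_hull_insert_span_gen)
qed

lemma scaleR_image_pos_hull:
  assumes "t > 0"
  shows "(*\<^sub>R) t ` pos_hull v T = pos_hull v T"
proof
  show "(*\<^sub>R) t ` pos_hull v T \<subseteq> pos_hull v T"
    using assms by (auto intro: pos_hull_scaleR)
  show "pos_hull v T \<subseteq> (*\<^sub>R) t ` pos_hull v T"
  proof
    fix x assume "x \<in> pos_hull v T"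
    hence "x /\<^sub>R t \<in> pos_hull v T" using assms by (simp add: pos_hull_scaleR)
    moreover have "x = t *\<^sub>R (x /\<^sub>R t)" using assms by simp
    ultimately show "x \<in> (*\<^sub>R) t ` pos_hull v T" by blast
  qed
qed

lemma rel_interior_simplex_subset_rel_interior_pos_hull:
  fixes v :: "'n::finite \<Rightarrow> 'a::euclidean_space"
  shows "rel_interior (convex hull (insert 0 (v ` T))) \<subseteq> rel_interior (pos_hull v T)"
proof (rule rel_interior_mono)
  have "insert 0 (v ` T) \<subseteq> pos_hull v T"
    using zero_in_pos_hull generator_in_pos_hull by blast
  thus "convex hull (insert 0 (v ` T)) \<subseteq> pos_hull v T"
    by (rule hull_minimal) (rule convex_pos_hull)
  show "affine hull (convex hull (insert 0 (v ` T))) = affine hull (pos_hull v T)"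
    by (simp add: affine_hull_convex_hull affine_hull_insert_span_gen affine_hull_pos_hull)
qed

lemma rel_interior_pos_hull:
  fixes v :: "'n::finite \<Rightarrow> 'a::euclidean_space"
  assumes inj: "inj_on v T" and ind: "independent (v ` T)" and pos: "\<forall>i\<in>T. c i > 0"
  shows "(\<Sum>i\<in>T. c i *\<^sub>R v i) \<in> rel_interior (pos_hull v T)"
proof -
  define u where "u = (\<Sum>i\<in>T. c i *\<^sub>R v i)"
  define B where "B = insert 0 (v ` T)"
  \<comment> \<open>u/s lies in the open simplex on B, with weight 1/s on the vertex 0\<close>
  define s where "s = 1 + sum c T"
  define w where "w x = (if x = 0 then 1 / s else c (inv_into T v x) / s)" for x
  have "sum c T \<ge> 0" using pos by (simp add: sum_nonneg less_imp_le)
  hence s: "s > 0" by (simp add: s_def)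
  have zero: "0 \<notin> v ` T" using ind dependent_zero by blast
  have w_gen: "w (v i) = c i / s" if "i \<in> T" for i
    using that zero inj by (auto simp: w_def)
  have "\<not> affine_dependent B"
    using affine_dependent_imp_dependent2 ind by (auto simp: B_def)
  moreover have "\<forall>x\<in>B. 0 < w x" using s pos w_gen by (auto simp: B_def w_def[of 0])
  moreover have "sum w B = 1"
  proof -
    have "sum w B = 1 / s + (\<Sum>i\<in>T. c i / s)"
      using zero by (simp add: B_def w_def[of 0] sum.reindex[OF inj] w_gen)
    also have "\<dots> = 1" using s by (simp add: s_def sum_divide_distrib[symmetric] field_simps)
    finally show ?thesis .
  qed
  moreover have "(\<Sum>x\<in>B. w x *\<^sub>R x) = u /\<^sub>R s"
    using zero by (simp add: B_def sum.reindex[OF inj] w_gen u_def scaleR_sum_right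
        divide_inverse_commute)
  ultimately have "u /\<^sub>R s \<in> rel_interior (convex hull B)"
    by (auto simp: rel_interior_convex_hull_explicit)
  hence "u /\<^sub>R s \<in> rel_interior (pos_hull v T)"
    using rel_interior_simplex_subset_rel_interior_pos_hull B_def by blast
  hence "s *\<^sub>R (u /\<^sub>R s) \<in> (*\<^sub>R) s ` rel_interior (pos_hull v T)"
    by (rule imageI)
  also have "\<dots> = rel_interior (pos_hull v T)"
    using s by (simp add: rel_interior_scaleR scaleR_image_pos_hull)
  finally show ?thesis using s by (simp add: u_def)
qed

lemma simplicial_fanD:
  assumes "simplicial_fan v Delta" "S \<in> Delta"
  shows "T \<subseteq> S \<Longrightarrow> T \<in> Delta" "inj_on v S" "independent (v ` S)"
    "T \<in> Delta \<Longrightarrow> pos_hull v S \<inter> pos_hull v T = pos_hull v (S \<inter> T)"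
  using assms unfolding simplicial_fan_def by blast+

definition coeffs_on ::
    "('n::finite \<Rightarrow> 'a::euclidean_space) \<Rightarrow> 'n set \<Rightarrow> real^'n \<Rightarrow> 'a \<Rightarrow> bool" where
  "coeffs_on v S lam u \<longleftrightarrow>
     (\<forall>i. i \<notin> S \<longrightarrow> lam $ i = 0) \<and> u = (\<Sum>i\<in>S. lam $ i *\<^sub>R v i)"

lemma pos_hull_coeffs_on:
  assumes "u \<in> pos_hull v S"
  shows "\<exists>lam. coeffs_on v S lam u"
proof -
  obtain c where "u = (\<Sum>i\<in>S. c i *\<^sub>R v i)"
    using assms unfolding pos_hull_def by blast
  hence "coeffs_on v S (\<chi> i. if i \<in> S then c i else 0) u"
    unfolding coeffs_on_def by simp
  thus ?thesis ..
qed

lemma coeffs_on_mono: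
  assumes "coeffs_on v S lam u" "S \<subseteq> R"
  shows "coeffs_on v R lam u"
proof -
  have "(\<Sum>i\<in>S. lam $ i *\<^sub>R v i) = (\<Sum>i\<in>R. lam $ i *\<^sub>R v i)"
    using assms by (intro sum.mono_neutral_left) (auto simp: coeffs_on_def)
  with assms show ?thesis by (auto simp: coeffs_on_def)
qed

lemma coeffs_on_unique:
  assumes "inj_on v S" "independent (v ` S)" "coeffs_on v S lam u" "coeffs_on v S mu u"
  shows "lam = mu"
  unfolding vec_eq_iff
proof
  fix i show "lam $ i = mu $ i"
  proof (cases "i \<in> S")
    case True
    with assms show ?thesis
      by (intro independent_image_coeffs_eq[of v S]) (auto simp: coeffs_on_def)
  qed (use assms in \<open>auto simp: coeffs_on_def\<close>)
qed

lemma simplicial_fan_coeffs_on_unique: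
  assumes sf: "simplicial_fan v Delta" and "S \<in> Delta" "T \<in> Delta"
    and "u \<in> pos_hull v S" "u \<in> pos_hull v T"
    and "coeffs_on v S lam u" "coeffs_on v T mu u"
  shows "lam = mu"
proof -
  have "u \<in> pos_hull v (S \<inter> T)" using assms simplicial_fanD(4)[OF sf] by blast
  then obtain c where c: "coeffs_on v (S \<inter> T) c u" using pos_hull_coeffs_on by blast
  have "lam = c"
    by (rule coeffs_on_unique[OF simplicial_fanD(2,3)[OF sf \<open>S \<in> Delta\<close>]
          \<open>coeffs_on v S lam u\<close> coeffs_on_mono[OF c Int_lower1]])
  moreover have "mu = c"
    by (rule coeffs_on_unique[OF simplicial_fanD(2,3)[OF sf \<open>T \<in> Delta\<close>]
          \<open>coeffs_on v T mu u\<close> coeffs_on_mono[OF c Int_lower2]])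
  ultimately show ?thesis by simp
qed

lemma fan_coords_eqI:
  assumes sf: "simplicial_fan v Delta" and S: "S \<in> Delta"
    and u: "u \<in> rel_interior (pos_hull v S)" and lam: "coeffs_on v S lam u"
  shows "fan_coords v Delta u = lam"
  unfolding fan_coords_def coeffs_on_def[symmetric]
proof (rule the_equality)
  show "\<exists>S\<in>Delta. u \<in> rel_interior (pos_hull v S) \<and> coeffs_on v S lam u"
    using S u lam by blast
  fix mu assume "\<exists>T\<in>Delta. u \<in> rel_interior (pos_hull v T) \<and> coeffs_on v T mu u"
  then obtain T where "T \<in> Delta" "u \<in> rel_interior (pos_hull v T)" "coeffs_on v T mu u"
    by blast
  with S u lam show "mu = lam"
    by (intro simplicial_fan_coeffs_on_unique[OF sf, of T S])
      (auto dest: rel_interior_subset[THEN subsetD])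
qed

lemma fan_coords_pos_hull:
  assumes sf: "simplicial_fan v Delta" and S: "S \<in> Delta" and c: "\<forall>i\<in>S. c i \<ge> 0"
  shows "fan_coords v Delta (\<Sum>i\<in>S. c i *\<^sub>R v i) = (\<chi> i. if i \<in> S then c i else 0)"
proof -
  define T where "T = {i\<in>S. c i > 0}"
  have T: "T \<in> Delta" using simplicial_fanD(1)[OF sf S] by (auto simp: T_def)
  have off_T: "c i = 0" if "i \<in> S - T" for i
    using that c by (force simp: T_def)
  have sum_T: "(\<Sum>i\<in>S. c i *\<^sub>R v i) = (\<Sum>i\<in>T. c i *\<^sub>R v i)"
    using off_T by (intro sum.mono_neutral_right) (auto simp: T_def)
  have "(\<Sum>i\<in>T. c i *\<^sub>R v i) \<in> rel_interior (pos_hull v T)"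
    using simplicial_fanD(2,3)[OF sf T] by (rule rel_interior_pos_hull) (simp add: T_def)
  moreover have "coeffs_on v T (\<chi> i. if i \<in> S then c i else 0) (\<Sum>i\<in>T. c i *\<^sub>R v i)"
    using off_T by (auto simp: coeffs_on_def T_def intro: sum.cong)
  ultimately show ?thesis
    unfolding sum_T by (rule fan_coords_eqI[OF sf T])
qed

lemma support_fun_eqI:
  assumes "x \<in> P" "\<And>z. z \<in> P \<Longrightarrow> inner z u \<le> inner x u"
  shows "support_fun P u = inner x u"
  unfolding support_fun_def by (rule cSup_eq_maximum) (use assms in auto)

lemma support_fun_normal_cone:
  assumes "F face_of P" "x \<in> F" "u \<in> normal_cone P F"
  shows "support_fun P u = inner x u"
  using assms face_of_imp_subset[OF assms(1)] by (intro support_fun_eqI) (auto simp: normal_cone_def)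

lemma normal_fan_covers:
  fixes Q :: "'a::euclidean_space set"
  assumes "compact Q" "convex Q" "Q \<noteq> {}"
  shows "\<exists>C\<in>normal_fan Q. u \<in> C"
proof -
  have "continuous_on Q (\<lambda>z. inner z u)" by (intro continuous_intros)
  then obtain x where x: "x \<in> Q" "\<And>z. z \<in> Q \<Longrightarrow> inner z u \<le> inner x u"
    using continuous_attains_sup[OF assms(1,3)] by blast
  define F where "F = Q \<inter> {z. u \<bullet> z = u \<bullet> x}"
  have "F face_of Q" unfolding F_def
    by (rule face_of_Int_supporting_hyperplane_le) (use assms(2) x in \<open>auto simp: inner_commute\<close>)
  moreover have "x \<in> F" using x by (simp add: F_def)
  moreover have "u \<in> normal_cone Q F" using x by (auto simp: normal_cone_def F_def inner_commute)
  ultimately show ?thesis unfolding normal_fan_def by blast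
qed

lemma polytopal_fan_covers:
  assumes "polytopal_fan v Delta"
  shows "\<exists>S\<in>Delta. u \<in> pos_hull v S"
proof -
  obtain Q where Q: "polytope Q" "Q \<noteq> {}" "normal_fan Q = fan_cones v Delta"
    using assms unfolding polytopal_fan_def by blast
  then obtain C where "C \<in> fan_cones v Delta" "u \<in> C"
    using normal_fan_covers[of Q u] polytope_imp_compact polytope_imp_convex by metis
  thus ?thesis unfolding fan_cones_def by blast
qed

lemma support_fun_linear_on_cone:
  fixes v :: "'n::finite \<Rightarrow> 'a::euclidean_space"
  assumes P: "coarsened_by P v Delta" and S: "S \<in> Delta" and c: "\<forall>i\<in>S. c i \<ge> 0"
  shows "support_fun P (\<Sum>i\<in>S. c i *\<^sub>R v i) = (\<Sum>i\<in>S. c i * support_fun P (v i))"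
proof -
  obtain F where F: "F face_of P" "F \<noteq> {}" and cone: "pos_hull v S \<subseteq> normal_cone P F"
    using P S unfolding coarsened_by_def normal_fan_def by blast
  then obtain x where x: "x \<in> F" by blast
  have h_P: "support_fun P w = inner x w" if "w \<in> pos_hull v S" for w
    using support_fun_normal_cone[OF F(1) x] cone that by blast
  have "(\<Sum>i\<in>S. c i *\<^sub>R v i) \<in> pos_hull v S"
    using c unfolding pos_hull_def by blast
  hence "support_fun P (\<Sum>i\<in>S. c i *\<^sub>R v i) = (\<Sum>i\<in>S. c i * inner x (v i))"
    by (simp add: h_P inner_sum_right)
  also have "\<dots> = (\<Sum>i\<in>S. c i * support_fun P (v i))"
    by (intro sum.cong refl) (simp add: h_P generator_in_pos_hull)
  finally show ?thesis .
qed

lemma A_mat_support_vec: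
  fixes v :: "'n::finite \<Rightarrow> 'a::euclidean_space" and U :: "'m::finite \<Rightarrow> 'a"
  assumes sf: "simplicial_fan v Delta" and pf: "polytopal_fan v Delta"
    and P: "coarsened_by P v Delta"
  shows "A_mat v Delta U *v support_vec v P = (\<chi> k. support_fun P (U k))"
proof -
  have "(A_mat v Delta U *v support_vec v P) $ k = support_fun P (U k)" for k
  proof -
    obtain S where S: "S \<in> Delta" "U k \<in> pos_hull v S"
      using polytopal_fan_covers[OF pf] by blast
    then obtain c where c: "U k = (\<Sum>i\<in>S. c i *\<^sub>R v i)" "\<forall>i\<in>S. c i \<ge> 0"
      unfolding pos_hull_def by blast
    have "(A_mat v Delta U *v support_vec v P) $ k
        = (\<Sum>i\<in>UNIV. (if i \<in> S then c i else 0) * support_fun P (v i))"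
      by (simp add: matrix_vector_mult_def A_mat_def support_vec_def c(1)
          fan_coords_pos_hull[OF sf S(1) c(2)])
    also have "\<dots> = (\<Sum>i\<in>S. c i * support_fun P (v i))"
      by (simp add: if_distrib[of "\<lambda>a. a * _"] sum.If_cases)
    also have "\<dots> = support_fun P (U k)"
      by (simp add: c support_fun_linear_on_cone[OF P S(1)])
    finally show ?thesis .
  qed
  thus ?thesis by (simp add: vec_eq_iff)
qed

lemma ls_objective_nonneg: "ls_objective P U y \<ge> 0"
  unfolding ls_objective_def by (intro mult_nonneg_nonneg sum_nonneg) auto

lemma ls_objective_eq_0_iff:
  "ls_objective P U y = 0 \<longleftrightarrow> (\<chi> k. support_fun P (U k)) = y"
proof -
  have "ls_objective P U y = 0 \<longleftrightarrow> (\<forall>k. (support_fun P (U k) - y $ k)\<^sup>2 = 0)"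
    unfolding ls_objective_def by (simp add: sum_nonneg_eq_0_iff)
  thus ?thesis by (simp add: vec_eq_iff)
qed

theorem corollary3p2:
  fixes v :: "'n::finite \<Rightarrow> 'a::euclidean_space"
    and Delta :: "'n set set"
    and U :: "'m::finite \<Rightarrow> 'a"
    and y :: "real^'m"
  assumes "simplicial_fan v Delta"
    and "polytopal_fan v Delta"
    and "\<exists>P\<in>def_polytopes v Delta. \<forall>i. y $ i = support_fun P (U i)"
  shows "ls_estimator v Delta U y = {h \<in> deformation_cone v Delta. A_mat v Delta U *v h = y}"
proof -
  let ?D = "def_polytopes v Delta"
  obtain P0 where P0: "P0 \<in> ?D" "ls_objective P0 U y = 0"
    using assms(3) by (auto simp: ls_objective_eq_0_iff vec_eq_iff)
  have minimizer_iff: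
    "(\<forall>Q\<in>?D. ls_objective P U y \<le> ls_objective Q U y) \<longleftrightarrow> ls_objective P U y = 0" for P
    using P0 ls_objective_nonneg by (metis order.antisym)
  have fit_iff: "A_mat v Delta U *v support_vec v P = y \<longleftrightarrow> ls_objective P U y = 0"
    if "P \<in> ?D" for P
    using that by (simp add: def_polytopes_def A_mat_support_vec[OF assms(1,2)] ls_objective_eq_0_iff)
  show ?thesis
    unfolding ls_estimator_def deformation_cone_def using minimizer_iff fit_iff by auto
qed

end
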